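(* Let $P=(P_1,\ldots,P_n)$ be a profile over a set of alternatives $A=\{a_1,\ldots,a_m\}$ with voter set $N=\{1,\ldots,n\}$, such that $P$ is single-crossing with respect to a tree $T$ on $N$ which is minimal for $P$. Let $w_{\mathrm{opt}}$ be an optimal $k$-assignment for $P$ (for a given misrepresentation function, under the Chamberlin–Courant rule). Let voter $1$ be an arbitrary vertex of $T$, and let $b\in A$ be the least preferred alternative of voter $1$ among the alternatives in $w_{\mathrm{opt}}(N)$. Then the set of voters $w_{\mathrm{opt}}^{-1}(b)$ is the vertex set of a terminal subtree of $T$.
   Context: Voter $v$ prefers $a$ to $b$ is written $a\succ_v b$; $\mathrm{pos}_v(c)$ is the position of $c$ in voter $v$'s order. Given a tree $T=(N,E)$, $P$ is single-crossing with respect to $T$ if for every pair of distinct alternatives $a,b$ either (i) there is an edge $e\in E$ (an "$ab$-cut") whose removal splits $T$ into two subtrees with vertex sets $V_1,V_2$ such that all voters in $V_1$ prefer $a$ to $b$ and all voters in $V_2$ prefer $b$ to $a$, or (ii) all voters agree on the relative order of $a$ and $b$. $T$ is minimal for $P$ if every edge of $T$ is an $ab$-cut for some pair $a,b$. A subtree $T'$ of $T$ is terminal if $T\setminus T'$ (the subgraph induced on the remaining vertices) is also a tree. A misrepresentation function is a map $r:N\times A\to\mathbb{Q}_{\ge0}$ with $\mathrm{pos}_v(c)<\mathrm{pos}_v(c')\Rightarrow r(v,c)\le r(v,c')$. A $k$-assignment is a map $w:N\to A$ with $|w(N)|\le k$; its total misrepresentation is $\sum_{v\in N}r(v,w(v))$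 (utilitarian) or $\max_{v\in N}r(v,w(v))$ (egalitarian); an optimal $k$-assignment minimizes it.
   Formalization: The optimal k-assignment $w_{\mathrm{opt}}$ also gives every voter her most preferred alternative among those in $w_{\mathrm{opt}}(N)$, besides minimizing the total misrepresentation. The statement above fails without it. *)

theory Defs
  imports Complex_Main
begin

text \<open>pref v a b means: voter v strictly prefers a to b.\<close>

definition strict_linear_order_on :: "'a set \<Rightarrow> ('a \<Rightarrow> 'a \<Rightarrow> bool) \<Rightarrow> bool" where
  "strict_linear_order_on A R \<longleftrightarrow>
     (\<forall>a\<in>A. \<not> R a a) \<and>
     (\<forall>a\<in>A. \<forall>b\<in>A. \<forall>c\<in>A. R a b \<longrightarrow> R b c \<longrightarrow> R a c) \<and>
     (\<forall>a\<in>A. \<forall>b\<in>A. a \<noteq> b \<longrightarrow> R a b \<or> R b a)"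

definition profile :: "'v set \<Rightarrow> 'a set \<Rightarrow> ('v \<Rightarrow> 'a \<Rightarrow> 'a \<Rightarrow> bool) \<Rightarrow> bool" where
  "profile N A pref \<longleftrightarrow> finite N \<and> N \<noteq> {} \<and> finite A \<and> A \<noteq> {} \<and>
     (\<forall>v\<in>N. strict_linear_order_on A (pref v))"

definition induced_edges :: "'v set set \<Rightarrow> 'v set \<Rightarrow> 'v set set" where
  "induced_edges E V = {e \<in> E. e \<subseteq> V}"

definition adj_rel :: "'v set set \<Rightarrow> ('v \<times> 'v) set" where
  "adj_rel E = {(u, v). {u, v} \<in> E \<and> u \<noteq> v}"

definition connected_graph :: "'v set \<Rightarrow> 'v set set \<Rightarrow> bool" where
  "connected_graph V E \<longleftrightarrow> (\<forall>u\<in>V. \<forall>v\<in>V. (u, v) \<in> (adj_rel E)\<^sup>*)"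

definition is_cycle :: "'v set set \<Rightarrow> 'v list \<Rightarrow> bool" where
  "is_cycle E cs \<longleftrightarrow> length cs \<ge> 3 \<and> distinct cs \<and>
     (\<forall>i < length cs - 1. {cs ! i, cs ! Suc i} \<in> E) \<and> {last cs, hd cs} \<in> E"

definition is_tree :: "'v set \<Rightarrow> 'v set set \<Rightarrow> bool" where
  "is_tree V E \<longleftrightarrow> finite V \<and> V \<noteq> {} \<and>
     (\<forall>e\<in>E. e \<subseteq> V \<and> card e = 2) \<and>
     connected_graph V E \<and> \<not> (\<exists>cs. is_cycle E cs)"

definition is_subtree :: "'v set \<Rightarrow> 'v set set \<Rightarrow> 'v set \<Rightarrow> bool" where
  "is_subtree N E V \<longleftrightarrow> V \<subseteq> N \<and> is_tree V (induced_edges E V)"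

definition terminal_subtree :: "'v set \<Rightarrow> 'v set set \<Rightarrow> 'v set \<Rightarrow> bool" where
  "terminal_subtree N E V \<longleftrightarrow> is_subtree N E V \<and>
     (N - V = {} \<or> is_tree (N - V) (induced_edges E (N - V)))"

definition side :: "'v set set \<Rightarrow> 'v set \<Rightarrow> 'v \<Rightarrow> 'v set" where
  "side E e x = {v. (x, v) \<in> (adj_rel (E - {e}))\<^sup>*}"

definition ab_cut :: "'v set \<Rightarrow> 'v set set \<Rightarrow> ('v \<Rightarrow> 'a \<Rightarrow> 'a \<Rightarrow> bool) \<Rightarrow> 'v set \<Rightarrow> 'a \<Rightarrow> 'a \<Rightarrow> bool" where
  "ab_cut N E pref e a b \<longleftrightarrow> e \<in> E \<and>
     (\<exists>x y. e = {x, y} \<and> x \<noteq> y \<and>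
        (\<forall>v\<in>side E e x. pref v a b) \<and> (\<forall>v\<in>side E e y. pref v b a))"

definition single_crossing_tree ::
  "'v set \<Rightarrow> 'a set \<Rightarrow> ('v \<Rightarrow> 'a \<Rightarrow> 'a \<Rightarrow> bool) \<Rightarrow> 'v set set \<Rightarrow> bool" where
  "single_crossing_tree N A pref E \<longleftrightarrow> is_tree N E \<and>
     (\<forall>a\<in>A. \<forall>b\<in>A. a \<noteq> b \<longrightarrow>
        (\<exists>e. ab_cut N E pref e a b) \<or> (\<forall>v\<in>N. pref v a b) \<or> (\<forall>v\<in>N. pref v b a))"

definition minimal_tree ::
  "'v set \<Rightarrow> 'a set \<Rightarrow> ('v \<Rightarrow> 'a \<Rightarrow> 'a \<Rightarrow> bool) \<Rightarrow> 'v set set \<Rightarrow> bool" where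
  "minimal_tree N A pref E \<longleftrightarrow>
     (\<forall>e\<in>E. \<exists>a\<in>A. \<exists>b\<in>A. a \<noteq> b \<and> ab_cut N E pref e a b)"

definition misrep_fun ::
  "'v set \<Rightarrow> 'a set \<Rightarrow> ('v \<Rightarrow> 'a \<Rightarrow> 'a \<Rightarrow> bool) \<Rightarrow> ('v \<Rightarrow> 'a \<Rightarrow> rat) \<Rightarrow> bool" where
  "misrep_fun N A pref r \<longleftrightarrow>
     (\<forall>v\<in>N. \<forall>c\<in>A. r v c \<ge> 0) \<and>
     (\<forall>v\<in>N. \<forall>c\<in>A. \<forall>c'\<in>A. pref v c c' \<longrightarrow> r v c \<le> r v c')"

definition k_assignment :: "'v set \<Rightarrow> 'a set \<Rightarrow> nat \<Rightarrow> ('v \<Rightarrow> 'a) \<Rightarrow> bool" where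
  "k_assignment N A k w \<longleftrightarrow> w ` N \<subseteq> A \<and> card (w ` N) \<le> k"

datatype cc_variant = Utilitarian | Egalitarian

definition total_misrep :: "cc_variant \<Rightarrow> 'v set \<Rightarrow> ('v \<Rightarrow> 'a \<Rightarrow> rat) \<Rightarrow> ('v \<Rightarrow> 'a) \<Rightarrow> rat" where
  "total_misrep rule N r w =
     (case rule of Utilitarian \<Rightarrow> (\<Sum>v\<in>N. r v (w v))
                 | Egalitarian \<Rightarrow> Max ((\<lambda>v. r v (w v)) ` N))"

definition optimal_k_assignment ::
  "cc_variant \<Rightarrow> 'v set \<Rightarrow> 'a set \<Rightarrow> ('v \<Rightarrow> 'a \<Rightarrow> rat) \<Rightarrow> nat \<Rightarrow> ('v \<Rightarrow> 'a) \<Rightarrow> bool" where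
  "optimal_k_assignment rule N A r k w \<longleftrightarrow> k_assignment N A k w \<and>
     (\<forall>w'. k_assignment N A k w' \<longrightarrow> total_misrep rule N r w \<le> total_misrep rule N r w')"

text \<open>Chamberlin--Courant convention: every voter is represented by her most preferred
  alternative among the selected ones w(N).\<close>
definition cc_represents ::
  "'v set \<Rightarrow> ('v \<Rightarrow> 'a \<Rightarrow> 'a \<Rightarrow> bool) \<Rightarrow> ('v \<Rightarrow> 'a) \<Rightarrow> bool" where
  "cc_represents N pref w \<longleftrightarrow>
     (\<forall>v\<in>N. \<forall>c\<in>w ` N. c \<noteq> w v \<longrightarrow> pref v (w v) c)"

end

theory Submission
  imports Defs
begin

text \<open>For every alternative c \<noteq> b selected by w, voter u prefers c to b while the voters assigned
  to b prefer b to c, so single-crossing yields an edge of T separating the voters preferring b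
  to c (the far side, away from u) from those preferring c to b (the near side, containing u).
  The voters assigned to b are exactly those on the far side of all these edges. Such an
  intersection of far sides is connected: each of its vertices other than the one closest to u
  has its neighbour towards u in every far side, since a far side is entered from u only through
  its cut edge. Its complement is the union of the near sides, which is connected through u.\<close>

lemma strict_linear_order_on_asym:
  assumes "strict_linear_order_on A R" "a \<in> A" "b \<in> A" "R a b"
  shows "\<not> R b a"
  using assms unfolding strict_linear_order_on_def by blast

lemma sym_adj_rel: "sym (adj_rel F)"
  by (auto simp: sym_def adj_rel_def insert_commute)

lemma adj_rel_rtrancl_sym: "(a, b) \<in> (adj_rel F)\<^sup>* \<Longrightarrow> (b, a) \<in> (adj_rel F)\<^sup>*"
  using sym_rtrancl[OF sym_adj_rel] by (rule symD)

lemma connected_graph_if_hub: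
  assumes "\<forall>v\<in>V. (v, h) \<in> (adj_rel F)\<^sup>*"
  shows "connected_graph V F"
  unfolding connected_graph_def
proof (intro ballI)
  fix a c assume "a \<in> V" "c \<in> V"
  with assms have "(a, h) \<in> (adj_rel F)\<^sup>*" "(c, h) \<in> (adj_rel F)\<^sup>*" by blast+
  from this(1) adj_rel_rtrancl_sym[OF this(2)] show "(a, c) \<in> (adj_rel F)\<^sup>*" by (rule rtrancl_trans)
qed

lemma is_tree_induced:
  assumes "is_tree N E" "V \<subseteq> N" "V \<noteq> {}" "connected_graph V (induced_edges E V)"
  shows "is_tree V (induced_edges E V)"
proof -
  have "is_cycle E cs" if "is_cycle (induced_edges E V) cs" for cs
    using that by (auto simp: is_cycle_def induced_edges_def)
  then have "\<not> (\<exists>cs. is_cycle (induced_edges E V) cs)"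
    using assms(1) by (auto simp: is_tree_def)
  moreover have "finite V" using assms(1,2) finite_subset by (auto simp: is_tree_def)
  moreover have "\<forall>e\<in>induced_edges E V. e \<subseteq> V \<and> card e = 2"
    using assms(1) by (auto simp: is_tree_def induced_edges_def)
  ultimately show ?thesis using assms(3,4) by (simp add: is_tree_def)
qed

lemma side_self [simp]: "x \<in> side E e x"
  by (simp add: side_def)

lemma side_step:
  assumes "v \<in> side E e x" "(v, p) \<in> adj_rel E" "{v, p} \<noteq> e"
  shows "p \<in> side E e x"
proof -
  have "(v, p) \<in> adj_rel (E - {e})" using assms(2,3) by (auto simp: adj_rel_def)
  then show ?thesis using assms(1) unfolding side_def by (auto intro: rtrancl_into_rtrancl)
qed

lemma side_subset:
  assumes "\<forall>e\<in>E. e \<subseteq> N" "x \<in> N"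
  shows "side E e x \<subseteq> N"
proof
  fix v assume "v \<in> side E e x"
  then have "(x, v) \<in> (adj_rel (E - {e}))\<^sup>*" by (simp add: side_def)
  then show "v \<in> N"
  proof induction
    case (step v' v)
    then have "{v', v} \<in> E" by (simp add: adj_rel_def)
    then show ?case using assms(1) by auto
  qed (use assms(2) in simp)
qed

lemma sides_cover:
  assumes "connected_graph N E" "x \<in> N"
  shows "N \<subseteq> side E {x, y} x \<union> side E {x, y} y"
proof
  fix v assume "v \<in> N"
  then have "(x, v) \<in> (adj_rel E)\<^sup>*" using assms unfolding connected_graph_def by blast
  then show "v \<in> side E {x, y} x \<union> side E {x, y} y"
  proof induction
    case (step z v)
    show ?case
    proof (cases "{z, v} = {x, y}")
      case True
      then show ?thesis by (auto simp: doubleton_eq_iff)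
    next
      case False
      then show ?thesis using step.IH side_step[OF _ step.hyps(2) False] by blast
    qed
  qed simp
qed

lemma side_rtrancl_induced:
  assumes "side E e z \<subseteq> T" "v \<in> side E e z"
  shows "(z, v) \<in> (adj_rel (induced_edges E T))\<^sup>*"
proof -
  have "(z, v) \<in> (adj_rel (E - {e}))\<^sup>*" using assms(2) by (simp add: side_def)
  then show ?thesis
  proof induction
    case (step v' v)
    then have "v' \<in> T" "v \<in> T"
      using assms(1) unfolding side_def by (auto intro: rtrancl_into_rtrancl)
    with step.hyps(2) have "(v', v) \<in> adj_rel (induced_edges E T)"
      by (auto simp: adj_rel_def induced_edges_def)
    with step.IH show ?case by (rule rtrancl_into_rtrancl)
  qed simp
qed

lemma connected_graph_Union_sides:
  assumes "\<forall>i\<in>I. u \<in> side E (e i) (z i)"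
  defines "T \<equiv> \<Union>i\<in>I. side E (e i) (z i)"
  shows "connected_graph T (induced_edges E T)"
proof (rule connected_graph_if_hub)
  show "\<forall>v\<in>T. (v, u) \<in> (adj_rel (induced_edges E T))\<^sup>*"
  proof
    fix v assume "v \<in> T"
    then obtain i where i: "i \<in> I" "v \<in> side E (e i) (z i)" by (auto simp: T_def)
    have sub: "side E (e i) (z i) \<subseteq> T" using i(1) by (auto simp: T_def)
    have "(z i, v) \<in> (adj_rel (induced_edges E T))\<^sup>*"
      using side_rtrancl_induced[OF sub i(2)] .
    moreover have "(z i, u) \<in> (adj_rel (induced_edges E T))\<^sup>*"
      using side_rtrancl_induced[OF sub] assms(1) i(1) by blast
    ultimately show "(v, u) \<in> (adj_rel (induced_edges E T))\<^sup>*"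
      using adj_rel_rtrancl_sym rtrancl_trans by metis
  qed
qed

definition graph_dist :: "'v set set \<Rightarrow> 'v \<Rightarrow> 'v \<Rightarrow> nat" where
  "graph_dist E u v = (LEAST n. (u, v) \<in> (adj_rel E) ^^ n)"

lemma graph_dist_parent:
  assumes "connected_graph N E" "u \<in> N" "v \<in> N" "v \<noteq> u"
  obtains p where "(v, p) \<in> adj_rel E" "graph_dist E u p < graph_dist E u v"
proof -
  have "(u, v) \<in> (adj_rel E)\<^sup>*" using assms(1-3) unfolding connected_graph_def by blast
  then obtain n where "(u, v) \<in> (adj_rel E) ^^ n" using rtrancl_power by blast
  then have path: "(u, v) \<in> (adj_rel E) ^^ graph_dist E u v"
    unfolding graph_dist_def by (rule LeastI)
  then obtain m where m: "graph_dist E u v = Suc m"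
    using assms(4) by (cases "graph_dist E u v") auto
  with path obtain p where p: "(u, p) \<in> (adj_rel E) ^^ m" "(p, v) \<in> adj_rel E" by auto
  from p(1) have "graph_dist E u p \<le> m" unfolding graph_dist_def by (rule Least_le)
  with m show thesis using that[OF symD[OF sym_adj_rel p(2)]] by simp
qed

text \<open>A far side of an edge {x, y}, i.e. one containing neither u nor y, is entered from u only
  through x, so x is its unique vertex closest to u.\<close>

lemma far_side_closest:
  assumes conn: "connected_graph N E" and EN: "\<forall>e\<in>E. e \<subseteq> N"
    and "u \<in> N" "x \<in> N" "u \<notin> side E {x, y} x" "y \<notin> side E {x, y} x"
  shows "z \<in> side E {x, y} x \<Longrightarrow> z \<noteq> x \<Longrightarrow> graph_dist E u x < graph_dist E u z"
proof (induction "graph_dist E u z" arbitrary: z rule: less_induct)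
  case less
  have "z \<in> N" "z \<noteq> u" using less.prems side_subset[OF EN assms(4)] assms(5) by auto
  then obtain p where p: "(z, p) \<in> adj_rel E" "graph_dist E u p < graph_dist E u z"
    using graph_dist_parent[OF conn assms(3)] by blast
  have "{z, p} \<noteq> {x, y}" using less.prems assms(6) by (auto simp: doubleton_eq_iff)
  then have "p \<in> side E {x, y} x" using side_step[OF less.prems(1) p(1)] by blast
  then show ?case using less.hyps[OF p(2)] p(2) by (cases "p = x") auto
qed

lemma Inter_far_sides_connected:
  assumes conn: "connected_graph N E" and EN: "\<forall>e\<in>E. e \<subseteq> N" and u: "u \<in> N"
    and far: "\<forall>i\<in>I. x i \<in> N \<and> u \<notin> side E {x i, y i} (x i) \<and> y i \<notin> side E {x i, y i} (x i)"
  defines "V \<equiv> {v \<in> N. \<forall>i\<in>I. v \<in> side E {x i, y i} (x i)}"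
  assumes "I \<noteq> {}" "V \<noteq> {}"
  shows "connected_graph V (induced_edges E V)"
proof -
  obtain v0 where v0: "v0 \<in> V" "\<And>v. v \<in> V \<Longrightarrow> graph_dist E u v0 \<le> graph_dist E u v"
    using ex_has_least_nat[of "\<lambda>v. v \<in> V" _ "graph_dist E u"] \<open>V \<noteq> {}\<close> by blast
  have "v \<in> V \<Longrightarrow> (v, v0) \<in> (adj_rel (induced_edges E V))\<^sup>*" for v
  proof (induction "graph_dist E u v" arbitrary: v rule: less_induct)
    case less
    show ?case
    proof (cases "v = v0")
      case False
      \<comment> \<open>otherwise x i = v would be strictly closer to u than v0 \<in> side E {x i, y i} (x i)\<close>
      have not_x: "v \<noteq> x i" if "i \<in> I" for i
        using far_side_closest[OF conn EN u, of "x i" "y i" v0] far v0 that less.prems False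
        by (fastforce simp: V_def)
      have "u \<notin> V" using far \<open>I \<noteq> {}\<close> by (auto simp: V_def)
      then obtain p where p: "(v, p) \<in> adj_rel E" "graph_dist E u p < graph_dist E u v"
        using graph_dist_parent[OF conn u] less.prems by (auto simp: V_def)
      have "p \<in> V"
        unfolding V_def
      proof (intro CollectI conjI ballI)
        show "p \<in> N" using p(1) EN by (auto simp: adj_rel_def)
        fix i assume i: "i \<in> I"
        have "{v, p} \<noteq> {x i, y i}"
          using not_x[OF i] far i less.prems by (auto simp: V_def doubleton_eq_iff)
        then show "p \<in> side E {x i, y i} (x i)"
          using side_step[OF _ p(1)] less.prems i by (auto simp: V_def)
      qed
      with p(1) less.prems have "(v, p) \<in> adj_rel (induced_edges E V)"
        by (auto simp: adj_rel_def induced_edges_def)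
      then show ?thesis using less.hyps[OF p(2) \<open>p \<in> V\<close>] by (rule converse_rtrancl_into_rtrancl)
    qed simp
  qed
  then show ?thesis by (blast intro: connected_graph_if_hub)
qed

theorem terminal_subtree_Inter_far_sides:
  assumes tree: "is_tree N E" and u: "u \<in> N"
    and edges: "\<forall>i\<in>I. {x i, y i} \<in> E"
    and disjoint: "\<forall>i\<in>I. side E {x i, y i} (x i) \<inter> side E {x i, y i} (y i) = {}"
    and near: "\<forall>i\<in>I. u \<in> side E {x i, y i} (y i)"
  defines "V \<equiv> {v \<in> N. \<forall>i\<in>I. v \<in> side E {x i, y i} (x i)}"
  assumes "V \<noteq> {}"
  shows "terminal_subtree N E V"
proof (cases "I = {}")
  case True
  have "induced_edges E N = E" using tree by (auto simp: is_tree_def induced_edges_def)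
  with True tree show ?thesis by (simp add: V_def terminal_subtree_def is_subtree_def)
next
  case False
  have conn: "connected_graph N E" and EN: "\<forall>e\<in>E. e \<subseteq> N" using tree by (auto simp: is_tree_def)
  have xy: "x i \<in> N" "y i \<in> N" if "i \<in> I" for i using edges EN that by blast+
  have "connected_graph V (induced_edges E V)"
    unfolding V_def
  proof (rule Inter_far_sides_connected[OF conn EN u _ False])
    show "\<forall>i\<in>I. x i \<in> N \<and> u \<notin> side E {x i, y i} (x i) \<and> y i \<notin> side E {x i, y i} (x i)"
    proof
      fix i assume i: "i \<in> I"
      have "y i \<in> side E {x i, y i} (y i)" "u \<in> side E {x i, y i} (y i)" using near i by simp_all
      then show "x i \<in> N \<and> u \<notin> side E {x i, y i} (x i) \<and> y i \<notin> side E {x i, y i} (x i)"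
        using xy(1)[OF i] disjoint i by blast
    qed
  qed (use \<open>V \<noteq> {}\<close> in \<open>simp add: V_def\<close>)
  moreover have "V \<subseteq> N" by (auto simp: V_def)
  ultimately have "is_subtree N E V"
    unfolding is_subtree_def using is_tree_induced[OF tree _ \<open>V \<noteq> {}\<close>] by blast
  have "N - V = (\<Union>i\<in>I. side E {x i, y i} (y i))"
  proof
    show "N - V \<subseteq> (\<Union>i\<in>I. side E {x i, y i} (y i))"
      using sides_cover[OF conn xy(1)] by (fastforce simp: V_def)
    show "(\<Union>i\<in>I. side E {x i, y i} (y i)) \<subseteq> N - V"
      using side_subset[OF EN xy(2)] disjoint by (fastforce simp: V_def)
  qed
  then have "connected_graph (N - V) (induced_edges E (N - V))"
    using connected_graph_Union_sides[OF near] by simp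
  moreover obtain i where "i \<in> I" using False by blast
  then have "u \<in> N - V" using near disjoint u by (auto simp: V_def)
  ultimately have "is_tree (N - V) (induced_edges E (N - V))"
    using is_tree_induced[OF tree, of "N - V"] by blast
  with \<open>is_subtree N E V\<close> show ?thesis by (simp add: terminal_subtree_def)
qed

lemma single_crossing_separating_edge:
  assumes sc: "single_crossing_tree N A pref E"
    and lin: "\<forall>v\<in>N. strict_linear_order_on A (pref v)"
    and ab: "a \<in> A" "b \<in> A" "a \<noteq> b"
    and v1: "v1 \<in> N" "pref v1 a b" and v2: "v2 \<in> N" "pref v2 b a"
  obtains x y where "{x, y} \<in> E"
    "side E {x, y} x = {v \<in> N. pref v a b}" "side E {x, y} y = {v \<in> N. pref v b a}"
proof -
  have tree: "is_tree N E" using sc by (simp add: single_crossing_tree_def)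
  have conn: "connected_graph N E" and EN: "\<forall>e\<in>E. e \<subseteq> N" using tree by (auto simp: is_tree_def)
  have ba: "\<not> pref v b a" if "v \<in> N" "pref v a b" for v
    using strict_linear_order_on_asym[OF lin[rule_format, OF that(1)] ab(1,2) that(2)] .
  have ab': "\<not> pref v a b" if "v \<in> N" "pref v b a" for v
    using strict_linear_order_on_asym[OF lin[rule_format, OF that(1)] ab(2,1) that(2)] .
  have "(\<exists>e. ab_cut N E pref e a b) \<or> (\<forall>v\<in>N. pref v a b) \<or> (\<forall>v\<in>N. pref v b a)"
    using sc ab unfolding single_crossing_tree_def by blast
  moreover have "\<not> (\<forall>v\<in>N. pref v a b)" using ab' v2 by blast
  moreover have "\<not> (\<forall>v\<in>N. pref v b a)" using ba v1 by blast
  ultimately obtain e where "ab_cut N E pref e a b" by blast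
  then obtain x y where e: "{x, y} \<in> E"
      and sx: "\<forall>v\<in>side E {x, y} x. pref v a b" and sy: "\<forall>v\<in>side E {x, y} y. pref v b a"
    unfolding ab_cut_def by blast
  have xy: "x \<in> N" "y \<in> N" using e EN by blast+
  have cover: "N \<subseteq> side E {x, y} x \<union> side E {x, y} y" using sides_cover[OF conn xy(1)] .
  show thesis
  proof (rule that[OF e])
    show "side E {x, y} x = {v \<in> N. pref v a b}"
      using side_subset[OF EN xy(1)] sx cover sy ba by blast
    show "side E {x, y} y = {v \<in> N. pref v b a}"
      using side_subset[OF EN xy(2)] sy cover sx ab' by blast
  qed
qed

lemma single_crossing_terminal_subtree:
  assumes sc: "single_crossing_tree N A pref E"
    and lin: "\<forall>v\<in>N. strict_linear_order_on A (pref v)"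
    and "b \<in> A" "C \<subseteq> A" "b \<notin> C"
    and u: "u \<in> N" "\<forall>c\<in>C. pref u c b"
  defines "V \<equiv> {v \<in> N. \<forall>c\<in>C. pref v b c}"
  assumes "V \<noteq> {}"
  shows "terminal_subtree N E V"
proof -
  define separates where "separates c x y \<longleftrightarrow> {x, y} \<in> E \<and>
    side E {x, y} x = {v \<in> N. pref v b c} \<and> side E {x, y} y = {v \<in> N. pref v c b}" for c x y
  obtain v1 where v1: "v1 \<in> N" "\<forall>c\<in>C. pref v1 b c" using \<open>V \<noteq> {}\<close> by (auto simp: V_def)
  have "\<exists>x y. separates c x y" if c: "c \<in> C" for c
  proof -
    have "c \<in> A" "b \<noteq> c" using c assms(4,5) by auto
    obtain x y where "{x, y} \<in> E"
      "side E {x, y} x = {v \<in> N. pref v b c}" "side E {x, y} y = {v \<in> N. pref v c b}"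
      by (rule single_crossing_separating_edge[OF sc lin \<open>b \<in> A\<close> \<open>c \<in> A\<close> \<open>b \<noteq> c\<close>
            v1(1) v1(2)[rule_format, OF c] u(1) u(2)[rule_format, OF c]])
    then show ?thesis unfolding separates_def by blast
  qed
  then obtain x y where sep: "\<forall>c\<in>C. separates c (x c) (y c)" by metis
  have V_eq: "V = {v \<in> N. \<forall>c\<in>C. v \<in> side E {x c, y c} (x c)}"
    using sep unfolding separates_def V_def by auto
  show ?thesis
    unfolding V_eq
  proof (rule terminal_subtree_Inter_far_sides[where I = C and x = x and y = y, OF _ u(1)])
    show "is_tree N E" using sc by (simp add: single_crossing_tree_def)
    show "\<forall>c\<in>C. {x c, y c} \<in> E" "\<forall>c\<in>C. u \<in> side E {x c, y c} (y c)"
      using sep u unfolding separates_def by auto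
    show "\<forall>c\<in>C. side E {x c, y c} (x c) \<inter> side E {x c, y c} (y c) = {}"
    proof
      fix c assume c: "c \<in> C"
      have "\<not> pref v c b" if "v \<in> N" "pref v b c" for v
        using strict_linear_order_on_asym[OF lin[rule_format, OF that(1)] \<open>b \<in> A\<close> _ that(2)]
          c assms(4) by blast
      then show "side E {x c, y c} (x c) \<inter> side E {x c, y c} (y c) = {}"
        using sep c unfolding separates_def by auto
    qed
    show "{v \<in> N. \<forall>c\<in>C. v \<in> side E {x c, y c} (x c)} \<noteq> {}"
      using V_eq \<open>V \<noteq> {}\<close> by simp
  qed
qed

lemma cc_represents_assigned_eq:
  assumes cc: "cc_represents N pref w" and lin: "\<forall>v\<in>N. strict_linear_order_on A (pref v)"
    and "w ` N \<subseteq> A" "b \<in> w ` N"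
  shows "{v \<in> N. w v = b} = {v \<in> N. \<forall>c\<in>w ` N - {b}. pref v b c}"
proof (rule Collect_cong, rule conj_cong[OF refl])
  fix v assume v: "v \<in> N"
  have top: "pref v (w v) c" if "c \<in> w ` N" "c \<noteq> w v" for c
    using cc v that unfolding cc_represents_def by blast
  show "w v = b \<longleftrightarrow> (\<forall>c\<in>w ` N - {b}. pref v b c)"
  proof
    assume "w v = b"
    then show "\<forall>c\<in>w ` N - {b}. pref v b c" using top by auto
  next
    assume all: "\<forall>c\<in>w ` N - {b}. pref v b c"
    show "w v = b"
    proof (rule ccontr)
      assume ne: "w v \<noteq> b"
      then have "pref v b (w v)" using all v by simp
      moreover have "pref v (w v) b" using top \<open>b \<in> w ` N\<close> ne by simp
      moreover have "w v \<in> A" "b \<in> A" using assms(3,4) v by auto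
      ultimately show False using strict_linear_order_on_asym lin v by metis
    qed
  qed
qed

theorem lemma3:
  fixes N :: "'v set" and A :: "'a set" and pref :: "'v \<Rightarrow> 'a \<Rightarrow> 'a \<Rightarrow> bool"
    and E :: "'v set set" and r :: "'v \<Rightarrow> 'a \<Rightarrow> rat" and k :: nat
    and rule :: cc_variant and w :: "'v \<Rightarrow> 'a" and u :: 'v and b :: 'a
  assumes "profile N A pref"
    and "single_crossing_tree N A pref E"
    and "minimal_tree N A pref E"
    and "misrep_fun N A pref r"
    and "optimal_k_assignment rule N A r k w"
    and "cc_represents N pref w"
    and "u \<in> N"
    and "b \<in> w ` N"
    and "\<forall>c\<in>w ` N. c \<noteq> b \<longrightarrow> pref u c b"
  shows "terminal_subtree N E {v \<in> N. w v = b}"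
proof -
  have lin: "\<forall>v\<in>N. strict_linear_order_on A (pref v)" using assms(1) by (simp add: profile_def)
  have WA: "w ` N \<subseteq> A"
    using assms(5) by (simp add: optimal_k_assignment_def k_assignment_def)
  have assigned: "{v \<in> N. w v = b} = {v \<in> N. \<forall>c\<in>w ` N - {b}. pref v b c}"
    using cc_represents_assigned_eq[OF assms(6) lin WA assms(8)] .
  have "terminal_subtree N E {v \<in> N. \<forall>c\<in>w ` N - {b}. pref v b c}"
  proof (rule single_crossing_terminal_subtree[OF assms(2) lin _ _ _ assms(7)])
    show "b \<in> A" "w ` N - {b} \<subseteq> A" "b \<notin> w ` N - {b}" using WA assms(8) by auto
    show "\<forall>c\<in>w ` N - {b}. pref u c b" using assms(9) by blast
    show "{v \<in> N. \<forall>c\<in>w ` N - {b}. pref v b c} \<noteq> {}"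
      using assigned assms(8) by blast
  qed
  with assigned show ?thesis by simp
qed

end
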